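(* Let $T$ be a c.n.u. contraction on $H$ and let $(H_+,H_-,\Gamma_+,\Gamma_-)$ be a boundary quadruple for $A_T^{\perp_s}$ with contractive Weyl function $B$. Suppose there is $\mathcal{C}\in\mathbb{B}(H_+,H_-)$ such that the graph of $T$ equals $\{a\in A_T^{\perp_s}:\Gamma_-a=\mathcal{C}\Gamma_+a\}$. Then for every $x\in H$, with $a=(x,Tx)\in A_T^{\perp_s}$, $$\lambda f_{\hat x}(\lambda)-f_{\widehat{Tx}}(\lambda)=(B(\lambda)-\mathcal{C})\Gamma_+a\quad(\lambda\in\mathbb{D}_+),$$ $$f_{\hat x}(\lambda)-\lambda f_{\widehat{Tx}}(\lambda)=(I-B(\bar\lambda)^*\mathcal{C})\Gamma_+a\quad(\lambda\in\mathbb{D}_-).$$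
   Context: $H$ is an infinite-dimensional separable complex Hilbert space with inner product $(\cdot,\cdot)_H$; $T\in\mathbb{B}(H)$, $\|T\|\le1$, is completely non-unitary. $\mathbb{K}=\ker(I-T^*T)$. $\mathbb{H}=H\oplus_\perp H$ with $[(x_1,x_2),(y_1,y_2)]=i(x_1,y_1)_H-i(x_2,y_2)_H$; $S^{\perp_s}=\{a:[a,b]=0\ \forall b\in S\}$; $A_T=\{(x,Tx):x\in\mathbb{K}\}$; the graph $\{(x,Tx):x\in H\}$ of $T$ lies in $A_T^{\perp_s}$. $\mathbb{D}_\pm$ are two copies of the open unit disc; for $\lambda\in\mathbb{D}_\pm$, $\bar\lambda$ is regarded as a point of $\mathbb{D}_\mp$. $N_\lambda=\{(x,\lambda x)\}\cap A_T^{\perp_s}$ ($\lambda\in\mathbb{D}_+$), $N_\lambda=\{(\lambda x,x)\}\cap A_T^{\perp_s}$ ($\lambda\in\mathbb{D}_-$). Boundary quadruple: Hilbert spaces $H_\pm$, linear $\Gamma_\pm:A_T^{\perp_s}\to H_\pm$ with $(\Gamma_+,\Gamma_-)$ bounded, onto $H_+\oplus_\perp H_-$, kernel $A_T$, and $[a,b]=i(\Gamma_+a,\Gamma_+b)-i(\Gamma_-a,\Gamma_-b)$. Contractive Weyl function $B$: for $\lambda\in\mathbb{D}_+$, $\Gamma_+|_{N_\lambda}$ bijective onto $H_+$, $\Gamma_-a=B(\lambda)\Gamma_+a$ on $N_\lambda$; for $\lambda\in\mathbb{D}_-$, $\Gamma_-|_{N_\lambda}$ bijective onto $H_-$, $\Gamma_+a=B(\bar\lambda)^*\Gamma_-a$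 on $N_\lambda$. $\gamma_+(\lambda)z\in N_\lambda$ with $\Gamma_+\gamma_+(\lambda)z=z$ ($\lambda\in\mathbb{D}_+$); $\gamma_-(\lambda)z\in N_\lambda$ with $\Gamma_-\gamma_-(\lambda)z=z$ ($\lambda\in\mathbb{D}_-$); $\varphi_+=pr_1\circ\gamma_+$, $\varphi_-=pr_2\circ\gamma_-$. $E_\lambda=pr_1(N_\lambda)$ or $pr_2(N_\lambda)$ for $\lambda\in\mathbb{D}_+$ or $\mathbb{D}_-$; $F^\dagger_\lambda=E_{\bar\lambda}$, $F_\lambda$ its conjugate-linear dual, pairing $((\cdot,\cdot))$. For $x\in H$, $\hat x(\lambda)\in F_\lambda$ is $\omega\mapsto(x,\omega)_H$. For $\lambda\in\mathbb{D}_+$, $(\varphi_-^\dagger(\lambda)\omega,z)_{H_-}=((\omega,\varphi_-(\bar\lambda)z))$; for $\lambda\in\mathbb{D}_-$, $(\varphi_+^\dagger(\lambda)\omega,z)_{H_+}=((\omega,\varphi_+(\bar\lambda)z))$; $f_s(\lambda)=\varphi_-^\dagger(\lambda)s(\lambda)$ on $\mathbb{D}_+$ and $\varphi_+^\dagger(\lambda)s(\lambda)$ on $\mathbb{D}_-$. *)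

theory Defs
  imports "HOL-Analysis.Analysis"
begin

class cvec = real_vector +
  fixes scaleC :: "complex \<Rightarrow> 'a \<Rightarrow> 'a" (infixr "*\<^sub>C" 75)
  assumes scaleC_add_right: "a *\<^sub>C (x + y) = a *\<^sub>C x + a *\<^sub>C y"
    and scaleC_add_left: "(a + b) *\<^sub>C x = a *\<^sub>C x + b *\<^sub>C x"
    and scaleC_scaleC: "a *\<^sub>C (b *\<^sub>C x) = (a * b) *\<^sub>C x"
    and scaleC_one: "1 *\<^sub>C x = x"
    and scaleR_scaleC: "scaleR r x = complex_of_real r *\<^sub>C x"

class cinner_space = cvec + real_normed_vector +
  fixes cinner :: "'a \<Rightarrow> 'a \<Rightarrow> complex"
  assumes cinner_conj: "cinner x y = cnj (cinner y x)"
    and cinner_add_left: "cinner (x + y) z = cinner x z + cinner y z"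
    and cinner_scaleC_left: "cinner (c *\<^sub>C x) y = c * cinner x y"
    and cinner_self_norm: "cinner x x = complex_of_real ((norm x)\<^sup>2)"

class chilbert = cinner_space + complete_space

definition clinear_map :: "('a::cvec \<Rightarrow> 'b::cvec) \<Rightarrow> bool" where
  "clinear_map f \<longleftrightarrow> (\<forall>x y. f (x + y) = f x + f y) \<and> (\<forall>c x. f (c *\<^sub>C x) = c *\<^sub>C f x)"

definition cbounded :: "('a::cinner_space \<Rightarrow> 'b::cinner_space) \<Rightarrow> bool" where
  "cbounded f \<longleftrightarrow> clinear_map f \<and> (\<exists>K. \<forall>x. norm (f x) \<le> K * norm x)"

definition cadjoint :: "('a::cinner_space \<Rightarrow> 'b::cinner_space) \<Rightarrow> 'b \<Rightarrow> 'a" where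
  "cadjoint f = (THE g. \<forall>x y. cinner (f x) y = cinner x (g y))"

definition separable_space :: "'a::cinner_space itself \<Rightarrow> bool" where
  "separable_space _ \<longleftrightarrow> (\<exists>D::'a set. countable D \<and> closure D = UNIV)"

definition infinite_dim :: "'a::cinner_space itself \<Rightarrow> bool" where
  "infinite_dim _ \<longleftrightarrow> \<not> (\<exists>S::'a set. finite S \<and> (\<forall>x. \<exists>c. x = (\<Sum>s\<in>S. c s *\<^sub>C s)))"

definition closed_csubspace :: "'a::cinner_space set \<Rightarrow> bool" where
  "closed_csubspace M \<longleftrightarrow> closed M \<and> 0 \<in> M \<and> (\<forall>x\<in>M. \<forall>y\<in>M. x + y \<in> M)
     \<and> (\<forall>c. \<forall>x\<in>M. c *\<^sub>C x \<in> M)"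

definition cnu :: "('a::cinner_space \<Rightarrow> 'a) \<Rightarrow> bool" where
  "cnu T \<longleftrightarrow> (\<forall>M. closed_csubspace M \<and> T ` M \<subseteq> M \<and> cadjoint T ` M \<subseteq> M
      \<and> (\<forall>x\<in>M. cadjoint T (T x) = x \<and> T (cadjoint T x) = x) \<longrightarrow> M = {0})"

definition contraction :: "('a::cinner_space \<Rightarrow> 'a) \<Rightarrow> bool" where
  "contraction T \<longleftrightarrow> cbounded T \<and> (\<forall>x. norm (T x) \<le> norm x)"

definition pscale :: "complex \<Rightarrow> 'a::cvec \<times> 'a \<Rightarrow> 'a \<times> 'a" where
  "pscale c a = (c *\<^sub>C fst a, c *\<^sub>C snd a)"

definition kform :: "'a::cinner_space \<times> 'a \<Rightarrow> 'a \<times> 'a \<Rightarrow> complex" where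
  "kform a b = \<i> * cinner (fst a) (fst b) - \<i> * cinner (snd a) (snd b)"

definition sorth :: "('a::cinner_space \<times> 'a) set \<Rightarrow> ('a \<times> 'a) set" where
  "sorth S = {a. \<forall>b\<in>S. kform a b = 0}"

definition KK :: "('a::cinner_space \<Rightarrow> 'a) \<Rightarrow> 'a set" where
  "KK T = {x. x - cadjoint T (T x) = 0}"

definition A_T :: "('a::cinner_space \<Rightarrow> 'a) \<Rightarrow> ('a \<times> 'a) set" where
  "A_T T = {(x, T x) | x. x \<in> KK T}"

definition graph_op :: "('a \<Rightarrow> 'a) \<Rightarrow> ('a \<times> 'a) set" where
  "graph_op T = {(x, T x) | x. True}"

text \<open>Defect subspaces: \<open>N_plus T \<lambda>\<close> for \<open>\<lambda> \<in> \<DD>\<^sub>+\<close>, \<open>N_minus T \<lambda>\<close> for \<open>\<lambda> \<in> \<DD>\<^sub>-\<close>.\<close>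
definition N_plus :: "('a::cinner_space \<Rightarrow> 'a) \<Rightarrow> complex \<Rightarrow> ('a \<times> 'a) set" where
  "N_plus T l = {(x, l *\<^sub>C x) | x. True} \<inter> sorth (A_T T)"

definition N_minus :: "('a::cinner_space \<Rightarrow> 'a) \<Rightarrow> complex \<Rightarrow> ('a \<times> 'a) set" where
  "N_minus T l = {(l *\<^sub>C x, x) | x. True} \<inter> sorth (A_T T)"

definition boundary_quadruple ::
  "('a::chilbert \<Rightarrow> 'a) \<Rightarrow> ('a \<times> 'a \<Rightarrow> 'p::chilbert) \<Rightarrow> ('a \<times> 'a \<Rightarrow> 'm::chilbert) \<Rightarrow> bool" where
  "boundary_quadruple T Gp Gm \<longleftrightarrow>
     (let A = sorth (A_T T) in
      (\<forall>a\<in>A. \<forall>b\<in>A. Gp (a + b) = Gp a + Gp b \<and> Gm (a + b) = Gm a + Gm b)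
    \<and> (\<forall>c. \<forall>a\<in>A. Gp (pscale c a) = c *\<^sub>C Gp a \<and> Gm (pscale c a) = c *\<^sub>C Gm a)
    \<and> (\<exists>K. \<forall>a\<in>A. (norm (Gp a))\<^sup>2 + (norm (Gm a))\<^sup>2 \<le> K * ((norm (fst a))\<^sup>2 + (norm (snd a))\<^sup>2))
    \<and> (\<forall>p m. \<exists>a\<in>A. Gp a = p \<and> Gm a = m)
    \<and> {a\<in>A. Gp a = 0 \<and> Gm a = 0} = A_T T
    \<and> (\<forall>a\<in>A. \<forall>b\<in>A. kform a b = \<i> * cinner (Gp a) (Gp b) - \<i> * cinner (Gm a) (Gm b)))"

text \<open>Contractive Weyl function; \<open>\<lambda>\<close> ranges over the open unit disc,
  the copy \<open>\<DD>\<^sub>+\<close> or \<open>\<DD>\<^sub>-\<close> being indicated by which clause is used.\<close>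
definition weyl_function ::
  "('a::chilbert \<Rightarrow> 'a) \<Rightarrow> ('a \<times> 'a \<Rightarrow> 'p::chilbert) \<Rightarrow> ('a \<times> 'a \<Rightarrow> 'm::chilbert)
     \<Rightarrow> (complex \<Rightarrow> 'p \<Rightarrow> 'm) \<Rightarrow> bool" where
  "weyl_function T Gp Gm B \<longleftrightarrow>
     (\<forall>l. cmod l < 1 \<longrightarrow> bij_betw Gp (N_plus T l) UNIV
                         \<and> (\<forall>a\<in>N_plus T l. Gm a = B l (Gp a)))
   \<and> (\<forall>l. cmod l < 1 \<longrightarrow> bij_betw Gm (N_minus T l) UNIV
                         \<and> (\<forall>a\<in>N_minus T l. Gp a = cadjoint (B (cnj l)) (Gm a)))"

definition gamma_plus :: "('a::chilbert \<Rightarrow> 'a) \<Rightarrow> ('a \<times> 'a \<Rightarrow> 'p::chilbert) \<Rightarrow> complex \<Rightarrow> 'p \<Rightarrow> 'a \<times> 'a" where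
  "gamma_plus T Gp l z = (THE a. a \<in> N_plus T l \<and> Gp a = z)"

definition gamma_minus :: "('a::chilbert \<Rightarrow> 'a) \<Rightarrow> ('a \<times> 'a \<Rightarrow> 'm::chilbert) \<Rightarrow> complex \<Rightarrow> 'm \<Rightarrow> 'a \<times> 'a" where
  "gamma_minus T Gm l z = (THE a. a \<in> N_minus T l \<and> Gm a = z)"

definition phi_plus where "phi_plus T Gp l z = fst (gamma_plus T Gp l z)"
definition phi_minus where "phi_minus T Gm l z = snd (gamma_minus T Gm l z)"

text \<open>A section s assigns to \<open>\<lambda>\<close> a functional \<open>s \<lambda> \<in> F\<^sub>\<lambda>\<close> on \<open>E\<^sub>\<bar>\<lambda>\<close>;
  the pairing \<open>((\<omega>, e))\<close> is evaluation \<open>\<omega> e\<close>.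
  \<open>f_plus\<close>: \<open>f\<^sub>s(\<lambda>) = \<phi>\<^sub>-\<^sup>\<dagger>(\<lambda>) s(\<lambda>)\<close> on \<open>\<DD>\<^sub>+\<close>;  \<open>f_minus\<close>: \<open>\<phi>\<^sub>+\<^sup>\<dagger>(\<lambda>) s(\<lambda>)\<close> on \<open>\<DD>\<^sub>-\<close>.\<close>
definition f_plus :: "('a::chilbert \<Rightarrow> 'a) \<Rightarrow> ('a \<times> 'a \<Rightarrow> 'm::chilbert)
    \<Rightarrow> (complex \<Rightarrow> 'a \<Rightarrow> complex) \<Rightarrow> complex \<Rightarrow> 'm" where
  "f_plus T Gm s l = (THE v. \<forall>z. cinner v z = s l (phi_minus T Gm (cnj l) z))"

definition f_minus :: "('a::chilbert \<Rightarrow> 'a) \<Rightarrow> ('a \<times> 'a \<Rightarrow> 'p::chilbert)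
    \<Rightarrow> (complex \<Rightarrow> 'a \<Rightarrow> complex) \<Rightarrow> complex \<Rightarrow> 'p" where
  "f_minus T Gp s l = (THE v. \<forall>z. cinner v z = s l (phi_plus T Gp (cnj l) z))"

definition xhat :: "'a::cinner_space \<Rightarrow> complex \<Rightarrow> 'a \<Rightarrow> complex" where
  "xhat x l \<omega> = cinner x \<omega>"

end

theory Submission
  imports Defs
begin

text \<open>
  Everything follows from the Green identity
  \<open>[a, b] = i (\<Gamma>\<^sub>+ a, \<Gamma>\<^sub>+ b) - i (\<Gamma>\<^sub>- a, \<Gamma>\<^sub>- b)\<close> with \<open>a = (u, v)\<close> in \<open>A\<^sub>T\<^sup>\<bottom>\<close>
  and \<open>b\<close> in a defect subspace \<open>N\<^sub>\<mu>\<close>, \<open>\<mu> = conj \<lambda>\<close>.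
  For \<open>b = (\<mu> y, y)\<close> the left side is \<open>i (\<lambda> u - v, y)\<close>, and the Weyl function turns the
  right side into \<open>i (B(\<lambda>) \<Gamma>\<^sub>+ a - \<Gamma>\<^sub>- a, \<Gamma>\<^sub>- b)\<close>, because \<open>N\<^sub>\<lambda>\<close> and \<open>N\<^sub>\<mu>\<close> are
  \<open>[\<cdot>,\<cdot>]\<close>-orthogonal, which makes \<open>\<Gamma>\<^sub>+ \<gamma>\<^sub>-(\<mu>)\<close> the adjoint of \<open>B(\<lambda>)\<close>.
  Since \<open>y = \<phi>\<^sub>-(\<mu>) \<Gamma>\<^sub>- b\<close>, the left side is also the pairing of
  \<open>\<lambda> f\<^bsub>u\<^esub>(\<lambda>) - f\<^bsub>v\<^esub>(\<lambda>)\<close> with \<open>\<Gamma>\<^sub>- b\<close>; the case \<open>b = (y, \<mu> y)\<close> is symmetric.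
  The corollary is the case \<open>a = (x, T x)\<close>, where \<open>\<Gamma>\<^sub>- a = C \<Gamma>\<^sub>+ a\<close>.

  The vectors \<open>f\<^bsub>u\<^esub>(\<lambda>)\<close> exist by the Riesz representation theorem, which follows from the
  nearest-point property of closed convex sets: on \<open>N\<^sub>\<mu>\<close> the Green identity gives
  \<open>(1 - |\<mu>|\<^sup>2) \<parallel>y\<parallel>\<^sup>2 \<le> \<parallel>\<Gamma> b\<parallel>\<^sup>2\<close>, so \<open>\<phi>\<^sub>\<plusminus>\<close> are bounded.
\<close>

section \<open>Complex inner product spaces\<close>

lemma cinner_zero_left [simp]: "cinner (0::'a::cinner_space) y = 0"
  using cinner_add_left[of "0::'a" 0 y] by simp

lemma cinner_minus_left [simp]: "cinner (- x::'a::cinner_space) y = - cinner x y"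
  using cinner_add_left[of x "- x" y] by (simp add: add_eq_0_iff)

lemma cinner_diff_left: "cinner (x - y::'a::cinner_space) z = cinner x z - cinner y z"
  using cinner_add_left[of x "- y" z] by simp

lemma cinner_add_right: "cinner (z::'a::cinner_space) (x + y) = cinner z x + cinner z y"
  by (subst (1 2 3) cinner_conj) (simp add: cinner_add_left)

lemma cinner_diff_right: "cinner (z::'a::cinner_space) (x - y) = cinner z x - cinner z y"
  by (subst (1 2 3) cinner_conj) (simp add: cinner_diff_left)

lemma cinner_zero_right [simp]: "cinner (y::'a::cinner_space) 0 = 0"
  by (subst cinner_conj) simp

lemma cinner_scaleC_right: "cinner (x::'a::cinner_space) (c *\<^sub>C y) = cnj c * cinner x y"
  by (subst (1 2) cinner_conj) (simp add: cinner_scaleC_left)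

lemma cinner_eq_zero_iff [simp]: "cinner (x::'a::cinner_space) x = 0 \<longleftrightarrow> x = 0"
  by (simp add: cinner_self_norm)

lemma cinner_ext: "(\<And>z. cinner a z = cinner b z) \<Longrightarrow> a = (b::'a::cinner_space)"
  using cinner_eq_zero_iff[of "a - b"] by (simp add: cinner_diff_left)

lemma cinner_ext_right: "(\<And>z. cinner z a = cinner z b) \<Longrightarrow> a = (b::'a::cinner_space)"
  by (rule cinner_ext) (metis cinner_conj)

lemma norm_scaleC: "norm (c *\<^sub>C x) = cmod c * norm (x::'a::cinner_space)"
proof -
  have "complex_of_real ((norm (c *\<^sub>C x))\<^sup>2) = cinner (c *\<^sub>C x) (c *\<^sub>C x)"
    by (rule cinner_self_norm[symmetric])
  also have "\<dots> = c * cnj c * cinner x x"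
    by (simp add: cinner_scaleC_left cinner_scaleC_right)
  also have "\<dots> = complex_of_real ((cmod c * norm x)\<^sup>2)"
    by (simp add: complex_norm_square[symmetric] cinner_self_norm power_mult_distrib)
  finally show ?thesis
    by (simp only: of_real_eq_iff) (simp add: power2_eq_iff_nonneg)
qed

lemma norm_diff_scaleC_power2:
  fixes x y :: "'a::cinner_space"
  assumes "y \<noteq> 0"
  shows "(norm (x - (cinner x y / complex_of_real ((norm y)\<^sup>2)) *\<^sub>C y))\<^sup>2
           = (norm x)\<^sup>2 - (cmod (cinner x y))\<^sup>2 / (norm y)\<^sup>2"
proof -
  define g where "g = cinner x y"
  define n where "n = complex_of_real ((norm y)\<^sup>2)"
  define t where "t = g / n"
  have "n \<noteq> 0" using assms by (simp add: n_def)
  have "complex_of_real ((norm (x - t *\<^sub>C y))\<^sup>2) = cinner (x - t *\<^sub>C y) (x - t *\<^sub>C y)"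
    by (rule cinner_self_norm[symmetric])
  also have "\<dots> = cinner x x - cnj t * g - t * cnj g + t * cnj t * n"
    using cinner_conj[of y x] cinner_self_norm[of y]
    by (simp add: cinner_diff_left cinner_diff_right cinner_scaleC_left cinner_scaleC_right
        g_def n_def algebra_simps)
  also have "\<dots> = cinner x x - g * cnj g / n"
    using \<open>n \<noteq> 0\<close> by (simp add: t_def n_def field_simps power2_eq_square)
  also have "\<dots> = complex_of_real ((norm x)\<^sup>2 - (cmod g)\<^sup>2 / (norm y)\<^sup>2)"
    by (simp add: cinner_self_norm complex_norm_square[symmetric] n_def)
  finally show ?thesis
    by (simp only: of_real_eq_iff g_def n_def t_def)
qed

lemma cmod_cinner_le: "cmod (cinner x y) \<le> norm x * norm (y::'a::cinner_space)"
proof (cases "y = 0")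
  case False
  have "(cmod (cinner x y))\<^sup>2 / (norm y)\<^sup>2 \<le> (norm x)\<^sup>2"
    using norm_diff_scaleC_power2[OF False, of x] by (metis diff_ge_0_iff_ge zero_le_power2)
  then have "(cmod (cinner x y))\<^sup>2 \<le> (norm x * norm y)\<^sup>2"
    using False by (simp add: divide_le_eq power_mult_distrib)
  then show ?thesis by (simp add: power2_le_iff_abs_le)
qed simp

lemma parallelogram_law:
  fixes a b :: "'a::cinner_space"
  shows "(norm (a + b))\<^sup>2 + (norm (a - b))\<^sup>2 = 2 * (norm a)\<^sup>2 + 2 * (norm b)\<^sup>2"
proof -
  have "complex_of_real ((norm (a + b))\<^sup>2 + (norm (a - b))\<^sup>2)
      = cinner (a + b) (a + b) + cinner (a - b) (a - b)"
    by (simp add: cinner_self_norm)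
  also have "\<dots> = 2 * cinner a a + 2 * cinner b b"
    by (simp add: cinner_add_left cinner_add_right cinner_diff_left cinner_diff_right)
  also have "\<dots> = complex_of_real (2 * (norm a)\<^sup>2 + 2 * (norm b)\<^sup>2)"
    by (simp add: cinner_self_norm)
  finally show ?thesis by (simp only: of_real_eq_iff)
qed

section \<open>The Riesz representation theorem\<close>

lemma convex_norm_diff_power2_le:
  fixes u a b :: "'a::cinner_space"
  assumes "convex M" "a \<in> M" "b \<in> M" and lower: "\<And>n. n \<in> M \<Longrightarrow> d \<le> (norm (u - n))\<^sup>2"
  shows "(norm (a - b))\<^sup>2 \<le> 2 * (norm (u - a))\<^sup>2 + 2 * (norm (u - b))\<^sup>2 - 4 * d"
proof -
  define m where "m = (1/2) *\<^sub>R a + (1/2) *\<^sub>R b"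
  have "m \<in> M" unfolding m_def by (rule convexD) (use assms in auto)
  have "(u - a) + (u - b) = 2 *\<^sub>R (u - m)"
    by (simp add: m_def algebra_simps scaleR_2)
  then have "(norm ((u - a) + (u - b)))\<^sup>2 = 4 * (norm (u - m))\<^sup>2"
    by (simp add: power_mult_distrib)
  moreover have "(u - a) - (u - b) = b - a" by simp
  ultimately show ?thesis
    using parallelogram_law[of "u - a" "u - b"] lower[OF \<open>m \<in> M\<close>]
    by (simp add: norm_minus_commute)
qed

lemma convex_minimizing_sequence_Cauchy:
  fixes u :: "'a::cinner_space"
  assumes "convex M" and sM: "\<And>k. s k \<in> M"
    and lower: "\<And>n. n \<in> M \<Longrightarrow> d \<le> (norm (u - n))\<^sup>2"
    and s_near: "\<And>k. (norm (u - s k))\<^sup>2 < d + inverse (real (Suc k))"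
  shows "Cauchy s"
proof (rule CauchyI)
  fix e :: real assume "0 < e"
  obtain N :: nat where "4 / e\<^sup>2 < real N" using reals_Archimedean2 by blast
  then have N: "4 / e\<^sup>2 < real (Suc N)" by simp
  have "norm (s j - s k) < e" if "N \<le> j" "N \<le> k" for j k
  proof -
    have "inverse (real (Suc j)) \<le> inverse (real (Suc N))"
      "inverse (real (Suc k)) \<le> inverse (real (Suc N))"
      using that by (simp_all add: le_imp_inverse_le)
    moreover have "4 * inverse (real (Suc N)) < e\<^sup>2"
      using N \<open>0 < e\<close> by (simp add: field_simps)
    ultimately have "(norm (s j - s k))\<^sup>2 < e\<^sup>2"
      using convex_norm_diff_power2_le[OF \<open>convex M\<close> sM sM lower, of j k] s_near[of j] s_near[of k]
      by linarith
    then show ?thesis using \<open>0 < e\<close> by (simp add: power_less_imp_less_base)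
  qed
  then show "\<exists>N. \<forall>j\<ge>N. \<forall>k\<ge>N. norm (s j - s k) < e" by blast
qed

lemma convex_nearest_point_exists:
  fixes u :: "'a::chilbert"
  assumes "closed M" "convex M" "M \<noteq> {}"
  shows "\<exists>p\<in>M. \<forall>n\<in>M. norm (u - p) \<le> norm (u - n)"
proof -
  define D where "D = (\<lambda>n. (norm (u - n))\<^sup>2) ` M"
  define d where "d = Inf D"
  have "bdd_below D" unfolding D_def by (rule bdd_belowI[of _ 0]) auto
  then have lower: "d \<le> (norm (u - n))\<^sup>2" if "n \<in> M" for n
    unfolding d_def D_def using that by (intro cInf_lower) auto
  have "\<exists>n\<in>M. (norm (u - n))\<^sup>2 < d + inverse (real (Suc k))" for k
    using cInf_less_iff[of D "d + inverse (real (Suc k))"] \<open>bdd_below D\<close> \<open>M \<noteq> {}\<close>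
    by (auto simp: d_def D_def)
  then obtain s where sM: "\<And>k. s k \<in> M"
    and s_near: "\<And>k. (norm (u - s k))\<^sup>2 < d + inverse (real (Suc k))" by metis
  have "Cauchy s" using \<open>convex M\<close> sM lower s_near by (rule convex_minimizing_sequence_Cauchy)
  then obtain p where "s \<longlonglongrightarrow> p" using Cauchy_convergent_iff convergent_def by blast
  with \<open>closed M\<close> sM have "p \<in> M" by (rule closed_sequentially)
  have "(norm (u - p))\<^sup>2 \<le> d"
  proof (rule LIMSEQ_le)
    show "(\<lambda>k. (norm (u - s k))\<^sup>2) \<longlonglongrightarrow> (norm (u - p))\<^sup>2"
      by (intro tendsto_intros \<open>s \<longlonglongrightarrow> p\<close>)
    show "(\<lambda>k. d + inverse (real (Suc k))) \<longlonglongrightarrow> d"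
      using tendsto_add[OF tendsto_const LIMSEQ_inverse_real_of_nat, of d] by simp
    show "\<exists>N. \<forall>k\<ge>N. (norm (u - s k))\<^sup>2 \<le> d + inverse (real (Suc k))"
      using s_near less_imp_le by blast
  qed
  then have "norm (u - p) \<le> norm (u - n)" if "n \<in> M" for n
    using lower[OF that] by (simp add: power2_le_imp_le)
  with \<open>p \<in> M\<close> show ?thesis by blast
qed

lemma nearest_point_orthogonal:
  fixes u p :: "'a::cinner_space"
  assumes add: "\<And>x y. x \<in> M \<Longrightarrow> y \<in> M \<Longrightarrow> x + y \<in> M"
    and scale: "\<And>c x. x \<in> M \<Longrightarrow> c *\<^sub>C x \<in> M"
    and "p \<in> M" and nearest: "\<And>n. n \<in> M \<Longrightarrow> norm (u - p) \<le> norm (u - n)"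
    and "n \<in> M"
  shows "cinner (u - p) n = 0"
proof (cases "n = 0")
  case False
  define t where "t = cinner (u - p) n / complex_of_real ((norm n)\<^sup>2)"
  have "p + t *\<^sub>C n \<in> M" using \<open>p \<in> M\<close> \<open>n \<in> M\<close> by (intro add scale)
  then have "norm (u - p) \<le> norm ((u - p) - t *\<^sub>C n)"
    using nearest by (simp add: algebra_simps)
  then have "(norm (u - p))\<^sup>2 \<le> (norm ((u - p) - t *\<^sub>C n))\<^sup>2"
    by (simp add: power_mono)
  also have "\<dots> = (norm (u - p))\<^sup>2 - (cmod (cinner (u - p) n))\<^sup>2 / (norm n)\<^sup>2"
    unfolding t_def by (rule norm_diff_scaleC_power2[OF False])
  finally have "(cmod (cinner (u - p) n))\<^sup>2 / (norm n)\<^sup>2 \<le> 0" by simp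
  then show ?thesis using False by (simp add: divide_le_0_iff)
qed simp

lemma cinner_representer_of_orthogonal_kernel:
  fixes f :: "'a::cinner_space \<Rightarrow> complex"
  assumes add: "\<And>x y. f (x + y) = f x + f y"
    and scale: "\<And>c x. f (c *\<^sub>C x) = c * f x"
    and "f e = 1" and orth: "\<And>n. f n = 0 \<Longrightarrow> cinner e n = 0"
  shows "f x = cinner x ((1 / (norm e)\<^sup>2) *\<^sub>R e)"
proof -
  have "f (x - f x *\<^sub>C e) = 0"
    using add[of "x - f x *\<^sub>C e" "f x *\<^sub>C e"] by (simp add: scale \<open>f e = 1\<close>)
  then have "cinner e (x - f x *\<^sub>C e) = 0" by (rule orth)
  then have "cinner e x = cnj (f x) * cinner e e"
    by (simp add: cinner_diff_right cinner_scaleC_right)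
  then have "cinner x e = f x * complex_of_real ((norm e)\<^sup>2)"
    by (subst cinner_conj) (simp add: cinner_self_norm)
  moreover have "e \<noteq> 0" using \<open>f e = 1\<close> add[of 0 0] by auto
  ultimately show ?thesis by (simp add: scaleR_scaleC cinner_scaleC_right)
qed

theorem riesz_representation:
  fixes f :: "'a::chilbert \<Rightarrow> complex"
  assumes add: "\<And>x y. f (x + y) = f x + f y"
    and scale: "\<And>c x. f (c *\<^sub>C x) = c * f x"
    and bounded: "\<And>x. cmod (f x) \<le> K * norm x"
  shows "\<exists>w. \<forall>x. f x = cinner x w"
proof (cases "\<forall>x. f x = 0")
  case False
  then obtain u0 where "f u0 \<noteq> 0" by blast
  define u where "u = (1 / f u0) *\<^sub>C u0"
  have "f u = 1" using \<open>f u0 \<noteq> 0\<close> by (simp add: u_def scale)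
  define N where "N = {x. f x = 0}"
  have "bounded_linear f"
  proof (rule bounded_linear_intro)
    show "f (r *\<^sub>R x) = r *\<^sub>R f x" for r x
      by (simp add: scaleR_scaleC scale scaleR_conv_of_real)
    show "norm (f x) \<le> norm x * K" for x
      using bounded[of x] by (simp add: mult.commute)
  qed (rule add)
  then interpret f: bounded_linear f .
  have "closed N" unfolding N_def
    by (intro closed_Collect_eq linear_continuous_on continuous_on_const \<open>bounded_linear f\<close>)
  moreover have "convex N" by (auto simp: N_def convex_def f.add f.scaleR)
  moreover have "0 \<in> N" by (simp add: N_def)
  ultimately obtain p where "p \<in> N" and nearest: "\<forall>n\<in>N. norm (u - p) \<le> norm (u - n)"
    using convex_nearest_point_exists by blast
  define e where "e = u - p"
  have "f e = 1" using \<open>f u = 1\<close> \<open>p \<in> N\<close> by (simp add: e_def N_def f.diff)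
  have "cinner e n = 0" if "n \<in> N" for n
    unfolding e_def using \<open>p \<in> N\<close> nearest that
    by (intro nearest_point_orthogonal[of N]) (auto simp: N_def add scale)
  then show ?thesis
    using \<open>f e = 1\<close> by (auto simp: N_def intro: cinner_representer_of_orthogonal_kernel add scale)
qed (auto intro: exI[of _ 0])

lemma cinner_adjoint_exists:
  fixes Y :: "'a::chilbert \<Rightarrow> 'b::cinner_space"
  assumes add: "\<And>x y. Y (x + y) = Y x + Y y"
    and scale: "\<And>c x. Y (c *\<^sub>C x) = c *\<^sub>C Y x"
    and bounded: "\<And>x. norm (Y x) \<le> K * norm x"
  shows "\<exists>w. \<forall>x. cinner w x = cinner v (Y x)"
proof -
  have "\<exists>w. \<forall>x. cinner (Y x) v = cinner x w"
  proof (rule riesz_representation)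
    show "cinner (Y (x + y)) v = cinner (Y x) v + cinner (Y y) v" for x y
      by (simp add: add cinner_add_left)
    show "cinner (Y (c *\<^sub>C x)) v = c * cinner (Y x) v" for c x
      by (simp add: scale cinner_scaleC_left)
    show "cmod (cinner (Y x) v) \<le> (K * norm v) * norm x" for x
    proof -
      have "cmod (cinner (Y x) v) \<le> norm (Y x) * norm v" by (rule cmod_cinner_le)
      also have "\<dots> \<le> K * norm x * norm v" by (rule mult_right_mono[OF bounded]) simp
      finally show ?thesis by (simp add: mult_ac)
    qed
  qed
  then show ?thesis by (metis cinner_conj)
qed

lemma cinner_The_representer:
  fixes F :: "'a::cinner_space \<Rightarrow> complex"
  assumes "\<exists>w. \<forall>z. cinner w z = F z"
  shows "cinner (THE w. \<forall>z. cinner w z = F z) z = F z"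
proof -
  from assms obtain w where w: "\<forall>z. cinner w z = F z" ..
  have "(THE w. \<forall>z. cinner w z = F z) = w"
    by (rule the_equality) (use w in \<open>auto intro: cinner_ext\<close>)
  with w show ?thesis by simp
qed

lemma cadjoint_eqI:
  assumes "\<And>x y. cinner (f x) y = cinner x (g y)"
  shows "cadjoint f = g"
  unfolding cadjoint_def
proof (rule the_equality)
  show "\<forall>x y. cinner (f x) y = cinner x (g y)" using assms by blast
  fix g' assume "\<forall>x y. cinner (f x) y = cinner x (g' y)"
  then show "g' = g" by (intro ext cinner_ext_right) (metis assms)
qed

section \<open>Defect subspaces and boundary quadruples\<close>

lemma bij_betw_ex1:
  assumes "bij_betw f A UNIV"
  shows "\<exists>!a. a \<in> A \<and> f a = z"
proof -
  from assms obtain a where "a \<in> A" "f a = z" by (metis bij_betw_def UNIV_I imageE)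
  with bij_betw_imp_inj_on[OF assms] show ?thesis by (auto simp: inj_on_def)
qed

lemma le_divide_sqrt_if_power2_le:
  fixes c y z :: real
  assumes "0 < c" "c * y\<^sup>2 \<le> z\<^sup>2" "0 \<le> z"
  shows "y \<le> z / sqrt c"
proof -
  have "y\<^sup>2 \<le> z\<^sup>2 / c" using assms by (simp add: le_divide_eq mult.commute)
  then have "y \<le> sqrt (z\<^sup>2 / c)" by (rule real_le_rsqrt)
  then show ?thesis using assms by (simp add: real_sqrt_divide)
qed

lemma kform_add_left: "kform (a + b) c = kform a c + kform b c"
  by (simp add: kform_def cinner_add_left algebra_simps)

lemma kform_pscale_left: "kform (pscale c a) b = c * kform a b"
  by (simp add: kform_def pscale_def cinner_scaleC_left algebra_simps)

lemma kform_self: "kform a a = \<i> * complex_of_real ((norm (fst a))\<^sup>2 - (norm (snd a))\<^sup>2)"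
  by (simp add: kform_def cinner_self_norm algebra_simps)

lemma sorth_add: "a \<in> sorth S \<Longrightarrow> b \<in> sorth S \<Longrightarrow> a + b \<in> sorth S"
  by (simp add: sorth_def kform_add_left)

lemma sorth_pscale: "a \<in> sorth S \<Longrightarrow> pscale c a \<in> sorth S"
  by (simp add: sorth_def kform_pscale_left)

lemma N_plus_iff: "a \<in> N_plus T l \<longleftrightarrow> snd a = l *\<^sub>C fst a \<and> a \<in> sorth (A_T T)"
  by (cases a) (auto simp: N_plus_def)

lemma N_minus_iff: "a \<in> N_minus T l \<longleftrightarrow> fst a = l *\<^sub>C snd a \<and> a \<in> sorth (A_T T)"
  by (cases a) (auto simp: N_minus_def)

lemma N_plus_add: "a \<in> N_plus T l \<Longrightarrow> b \<in> N_plus T l \<Longrightarrow> a + b \<in> N_plus T l"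
  by (simp add: N_plus_iff sorth_add scaleC_add_right)

lemma N_minus_add: "a \<in> N_minus T l \<Longrightarrow> b \<in> N_minus T l \<Longrightarrow> a + b \<in> N_minus T l"
  by (simp add: N_minus_iff sorth_add scaleC_add_right)

lemma N_plus_pscale: "a \<in> N_plus T l \<Longrightarrow> pscale c a \<in> N_plus T l"
  using sorth_pscale[of a _ c] by (auto simp: N_plus_iff pscale_def scaleC_scaleC mult.commute)

lemma N_minus_pscale: "a \<in> N_minus T l \<Longrightarrow> pscale c a \<in> N_minus T l"
  using sorth_pscale[of a _ c] by (auto simp: N_minus_iff pscale_def scaleC_scaleC mult.commute)

lemma kform_N_plus_N_minus:
  assumes "c \<in> N_plus T l" "a \<in> N_minus T (cnj l)"
  shows "kform c a = 0"
  using assms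
  by (simp add: N_plus_iff N_minus_iff kform_def cinner_scaleC_left cinner_scaleC_right)

locale weyl_boundary_quadruple =
  fixes T :: "'h::chilbert \<Rightarrow> 'h"
    and Gp :: "'h \<times> 'h \<Rightarrow> 'p::chilbert"
    and Gm :: "'h \<times> 'h \<Rightarrow> 'm::chilbert"
    and B :: "complex \<Rightarrow> 'p \<Rightarrow> 'm"
  assumes boundary_quadruple: "boundary_quadruple T Gp Gm"
    and weyl_function: "weyl_function T Gp Gm B"
begin

lemma Gp_add: "a \<in> sorth (A_T T) \<Longrightarrow> b \<in> sorth (A_T T) \<Longrightarrow> Gp (a + b) = Gp a + Gp b"
  and Gm_add: "a \<in> sorth (A_T T) \<Longrightarrow> b \<in> sorth (A_T T) \<Longrightarrow> Gm (a + b) = Gm a + Gm b"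
  and Gp_pscale: "a \<in> sorth (A_T T) \<Longrightarrow> Gp (pscale c a) = c *\<^sub>C Gp a"
  and Gm_pscale: "a \<in> sorth (A_T T) \<Longrightarrow> Gm (pscale c a) = c *\<^sub>C Gm a"
  using boundary_quadruple by (simp_all add: boundary_quadruple_def Let_def)

lemma Green_identity:
  "a \<in> sorth (A_T T) \<Longrightarrow> b \<in> sorth (A_T T) \<Longrightarrow>
    kform a b = \<i> * cinner (Gp a) (Gp b) - \<i> * cinner (Gm a) (Gm b)"
  using boundary_quadruple by (simp add: boundary_quadruple_def Let_def)

lemma Green_identity_diagonal:
  assumes "a \<in> sorth (A_T T)"
  shows "(norm (fst a))\<^sup>2 - (norm (snd a))\<^sup>2 = (norm (Gp a))\<^sup>2 - (norm (Gm a))\<^sup>2"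
  using Green_identity[OF assms assms]
  by (simp add: kform_self cinner_self_norm flip: right_diff_distrib of_real_diff of_real_power)

lemma Gm_N_plus: "cmod l < 1 \<Longrightarrow> a \<in> N_plus T l \<Longrightarrow> Gm a = B l (Gp a)"
  and Gp_N_minus: "cmod l < 1 \<Longrightarrow> a \<in> N_minus T l \<Longrightarrow> Gp a = cadjoint (B (cnj l)) (Gm a)"
  using weyl_function by (simp_all add: weyl_function_def)

lemma ex1_N_plus: "cmod l < 1 \<Longrightarrow> \<exists>!a. a \<in> N_plus T l \<and> Gp a = z"
  using weyl_function by (simp add: weyl_function_def bij_betw_ex1)

lemma ex1_N_minus: "cmod l < 1 \<Longrightarrow> \<exists>!a. a \<in> N_minus T l \<and> Gm a = z"
  using weyl_function by (simp add: weyl_function_def bij_betw_ex1)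

lemma gamma_plus_spec:
  "cmod l < 1 \<Longrightarrow> gamma_plus T Gp l z \<in> N_plus T l \<and> Gp (gamma_plus T Gp l z) = z"
  unfolding gamma_plus_def by (rule theI') (rule ex1_N_plus)

lemma gamma_minus_spec:
  "cmod l < 1 \<Longrightarrow> gamma_minus T Gm l z \<in> N_minus T l \<and> Gm (gamma_minus T Gm l z) = z"
  unfolding gamma_minus_def by (rule theI') (rule ex1_N_minus)

lemma gamma_plus_Gp: "cmod l < 1 \<Longrightarrow> a \<in> N_plus T l \<Longrightarrow> gamma_plus T Gp l (Gp a) = a"
  unfolding gamma_plus_def by (rule the1_equality[OF ex1_N_plus]) simp_all

lemma gamma_minus_Gm: "cmod l < 1 \<Longrightarrow> a \<in> N_minus T l \<Longrightarrow> gamma_minus T Gm l (Gm a) = a"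
  unfolding gamma_minus_def by (rule the1_equality[OF ex1_N_minus]) simp_all

lemma phi_plus_add:
    "cmod l < 1 \<Longrightarrow> phi_plus T Gp l (z1 + z2) = phi_plus T Gp l z1 + phi_plus T Gp l z2"
  and phi_plus_scaleC:
    "cmod l < 1 \<Longrightarrow> phi_plus T Gp l (c *\<^sub>C z) = c *\<^sub>C phi_plus T Gp l z"
proof -
  assume l: "cmod l < 1"
  let ?g = "gamma_plus T Gp l"
  have "?g z1 + ?g z2 \<in> N_plus T l" using gamma_plus_spec[OF l] by (simp add: N_plus_add)
  moreover have "Gp (?g z1 + ?g z2) = z1 + z2" using gamma_plus_spec[OF l] by (simp add: Gp_add N_plus_iff)
  ultimately have "?g (z1 + z2) = ?g z1 + ?g z2" by (metis gamma_plus_Gp[OF l])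
  then show "phi_plus T Gp l (z1 + z2) = phi_plus T Gp l z1 + phi_plus T Gp l z2"
    by (simp add: phi_plus_def)
  have "pscale c (?g z) \<in> N_plus T l" using gamma_plus_spec[OF l] by (simp add: N_plus_pscale)
  moreover have "Gp (pscale c (?g z)) = c *\<^sub>C z" using gamma_plus_spec[OF l] by (simp add: Gp_pscale N_plus_iff)
  ultimately have "?g (c *\<^sub>C z) = pscale c (?g z)" by (metis gamma_plus_Gp[OF l])
  then show "phi_plus T Gp l (c *\<^sub>C z) = c *\<^sub>C phi_plus T Gp l z"
    by (simp add: phi_plus_def pscale_def)
qed

lemma phi_minus_add:
    "cmod l < 1 \<Longrightarrow> phi_minus T Gm l (z1 + z2) = phi_minus T Gm l z1 + phi_minus T Gm l z2"
  and phi_minus_scaleC: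
    "cmod l < 1 \<Longrightarrow> phi_minus T Gm l (c *\<^sub>C z) = c *\<^sub>C phi_minus T Gm l z"
proof -
  assume l: "cmod l < 1"
  let ?g = "gamma_minus T Gm l"
  have "?g z1 + ?g z2 \<in> N_minus T l" using gamma_minus_spec[OF l] by (simp add: N_minus_add)
  moreover have "Gm (?g z1 + ?g z2) = z1 + z2" using gamma_minus_spec[OF l] by (simp add: Gm_add N_minus_iff)
  ultimately have "?g (z1 + z2) = ?g z1 + ?g z2" by (metis gamma_minus_Gm[OF l])
  then show "phi_minus T Gm l (z1 + z2) = phi_minus T Gm l z1 + phi_minus T Gm l z2"
    by (simp add: phi_minus_def)
  have "pscale c (?g z) \<in> N_minus T l" using gamma_minus_spec[OF l] by (simp add: N_minus_pscale)
  moreover have "Gm (pscale c (?g z)) = c *\<^sub>C z" using gamma_minus_spec[OF l] by (simp add: Gm_pscale N_minus_iff)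
  ultimately have "?g (c *\<^sub>C z) = pscale c (?g z)" by (metis gamma_minus_Gm[OF l])
  then show "phi_minus T Gm l (c *\<^sub>C z) = c *\<^sub>C phi_minus T Gm l z"
    by (simp add: phi_minus_def pscale_def)
qed

lemma norm_phi_plus_le:
  assumes "cmod l < 1"
  shows "norm (phi_plus T Gp l z) \<le> norm z / sqrt (1 - (cmod l)\<^sup>2)"
proof (rule le_divide_sqrt_if_power2_le)
  show "0 < 1 - (cmod l)\<^sup>2" using assms by (simp add: abs_square_less_1)
  define a where "a = gamma_plus T Gp l z"
  have a: "a \<in> N_plus T l" "Gp a = z" using gamma_plus_spec[OF assms] by (simp_all add: a_def)
  then have "(1 - (cmod l)\<^sup>2) * (norm (fst a))\<^sup>2 = (norm z)\<^sup>2 - (norm (Gm a))\<^sup>2"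
    using Green_identity_diagonal[of a] by (simp add: N_plus_iff norm_scaleC algebra_simps power_mult_distrib)
  then show "(1 - (cmod l)\<^sup>2) * (norm (phi_plus T Gp l z))\<^sup>2 \<le> (norm z)\<^sup>2"
    by (simp add: phi_plus_def a_def[symmetric])
qed simp

lemma norm_phi_minus_le:
  assumes "cmod l < 1"
  shows "norm (phi_minus T Gm l z) \<le> norm z / sqrt (1 - (cmod l)\<^sup>2)"
proof (rule le_divide_sqrt_if_power2_le)
  show "0 < 1 - (cmod l)\<^sup>2" using assms by (simp add: abs_square_less_1)
  define a where "a = gamma_minus T Gm l z"
  have a: "a \<in> N_minus T l" "Gm a = z" using gamma_minus_spec[OF assms] by (simp_all add: a_def)
  then have "(1 - (cmod l)\<^sup>2) * (norm (snd a))\<^sup>2 = (norm z)\<^sup>2 - (norm (Gp a))\<^sup>2"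
    using Green_identity_diagonal[of a] by (simp add: N_minus_iff norm_scaleC algebra_simps power_mult_distrib)
  then show "(1 - (cmod l)\<^sup>2) * (norm (phi_minus T Gm l z))\<^sup>2 \<le> (norm z)\<^sup>2"
    by (simp add: phi_minus_def a_def[symmetric])
qed simp

lemma cinner_f_plus_xhat:
  assumes "cmod l < 1"
  shows "cinner (f_plus T Gm (xhat u) l) z = cinner u (phi_minus T Gm (cnj l) z)"
  unfolding f_plus_def xhat_def
proof (rule cinner_The_representer, rule cinner_adjoint_exists)
  have l: "cmod (cnj l) < 1" using assms by simp
  show "phi_minus T Gm (cnj l) (x + y) = phi_minus T Gm (cnj l) x + phi_minus T Gm (cnj l) y" for x y
    by (rule phi_minus_add[OF l])
  show "phi_minus T Gm (cnj l) (c *\<^sub>C x) = c *\<^sub>C phi_minus T Gm (cnj l) x" for c x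
    by (rule phi_minus_scaleC[OF l])
  show "norm (phi_minus T Gm (cnj l) x) \<le> (1 / sqrt (1 - (cmod l)\<^sup>2)) * norm x" for x
    using norm_phi_minus_le[OF l, of x] by simp
qed

lemma cinner_f_minus_xhat:
  assumes "cmod l < 1"
  shows "cinner (f_minus T Gp (xhat u) l) z = cinner u (phi_plus T Gp (cnj l) z)"
  unfolding f_minus_def xhat_def
proof (rule cinner_The_representer, rule cinner_adjoint_exists)
  have l: "cmod (cnj l) < 1" using assms by simp
  show "phi_plus T Gp (cnj l) (x + y) = phi_plus T Gp (cnj l) x + phi_plus T Gp (cnj l) y" for x y
    by (rule phi_plus_add[OF l])
  show "phi_plus T Gp (cnj l) (c *\<^sub>C x) = c *\<^sub>C phi_plus T Gp (cnj l) x" for c x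
    by (rule phi_plus_scaleC[OF l])
  show "norm (phi_plus T Gp (cnj l) x) \<le> (1 / sqrt (1 - (cmod l)\<^sup>2)) * norm x" for x
    using norm_phi_plus_le[OF l, of x] by simp
qed

lemma cinner_weyl_adjoint:
  assumes "cmod l < 1"
  shows "cinner (B l p) z = cinner p (cadjoint (B l) z)"
proof -
  have l': "cmod (cnj l) < 1" using assms by simp
  have adjoint: "cinner (B l p) z = cinner p (Gp (gamma_minus T Gm (cnj l) z))" for p z
  proof -
    define c where "c = gamma_plus T Gp l p"
    define a where "a = gamma_minus T Gm (cnj l) z"
    have c: "c \<in> N_plus T l" "Gp c = p" "Gm c = B l p"
      using gamma_plus_spec[OF assms] Gm_N_plus[OF assms] by (simp_all add: c_def)
    have a: "a \<in> N_minus T (cnj l)" "Gm a = z"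
      using gamma_minus_spec[OF l'] by (simp_all add: a_def)
    have "\<i> * cinner p (Gp a) - \<i> * cinner (B l p) z = kform c a"
      using Green_identity c a by (simp add: N_plus_iff N_minus_iff)
    also have "\<dots> = 0" by (rule kform_N_plus_N_minus[OF c(1) a(1)])
    finally show ?thesis by (simp add: a_def flip: right_diff_distrib)
  qed
  then have "cadjoint (B l) = (\<lambda>z. Gp (gamma_minus T Gm (cnj l) z))" by (rule cadjoint_eqI)
  with adjoint show ?thesis by simp
qed

theorem f_plus_xhat_boundary:
  assumes "a \<in> sorth (A_T T)" "cmod l < 1"
  shows "l *\<^sub>C f_plus T Gm (xhat (fst a)) l - f_plus T Gm (xhat (snd a)) l = B l (Gp a) - Gm a"
proof (rule cinner_ext)
  fix z
  define b where "b = gamma_minus T Gm (cnj l) z"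
  have l': "cmod (cnj l) < 1" using assms by simp
  then have "b \<in> N_minus T (cnj l)" "Gm b = z" using gamma_minus_spec by (simp_all add: b_def)
  moreover from this have "Gp b = cadjoint (B l) z" using Gp_N_minus[OF l'] by simp
  ultimately have b: "b \<in> N_minus T (cnj l)" "Gm b = z" "Gp b = cadjoint (B l) z" by blast+
  have "cinner (l *\<^sub>C f_plus T Gm (xhat (fst a)) l - f_plus T Gm (xhat (snd a)) l) z
      = l * cinner (fst a) (snd b) - cinner (snd a) (snd b)"
    using assms(2) by (simp add: cinner_diff_left cinner_scaleC_left cinner_f_plus_xhat phi_minus_def b_def)
  also have "\<dots> = - \<i> * kform a b"
    using b(1) by (simp add: N_minus_iff kform_def cinner_scaleC_right algebra_simps)
  also have "\<dots> = cinner (B l (Gp a)) z - cinner (Gm a) z"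
    using Green_identity[OF assms(1), of b] b cinner_weyl_adjoint[OF assms(2)]
    by (simp add: N_minus_iff right_diff_distrib)
  finally show "cinner (l *\<^sub>C f_plus T Gm (xhat (fst a)) l - f_plus T Gm (xhat (snd a)) l) z
      = cinner (B l (Gp a) - Gm a) z"
    by (simp add: cinner_diff_left)
qed

theorem f_minus_xhat_boundary:
  assumes "a \<in> sorth (A_T T)" "cmod l < 1"
  shows "f_minus T Gp (xhat (fst a)) l - l *\<^sub>C f_minus T Gp (xhat (snd a)) l
           = Gp a - cadjoint (B (cnj l)) (Gm a)"
proof (rule cinner_ext)
  fix z
  define b where "b = gamma_plus T Gp (cnj l) z"
  have l': "cmod (cnj l) < 1" using assms by simp
  then have "b \<in> N_plus T (cnj l)" "Gp b = z" using gamma_plus_spec by (simp_all add: b_def)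
  moreover from this have "Gm b = B (cnj l) z" using Gm_N_plus[OF l'] by simp
  ultimately have b: "b \<in> N_plus T (cnj l)" "Gp b = z" "Gm b = B (cnj l) z" by blast+
  have "cinner (f_minus T Gp (xhat (fst a)) l - l *\<^sub>C f_minus T Gp (xhat (snd a)) l) z
      = cinner (fst a) (fst b) - l * cinner (snd a) (fst b)"
    using assms(2) by (simp add: cinner_diff_left cinner_scaleC_left cinner_f_minus_xhat phi_plus_def b_def)
  also have "\<dots> = - \<i> * kform a b"
    using b(1) by (simp add: N_plus_iff kform_def cinner_scaleC_right algebra_simps)
  also have "\<dots> = cinner (Gp a) z - cinner (Gm a) (B (cnj l) z)"
    using Green_identity[OF assms(1), of b] b by (simp add: N_plus_iff right_diff_distrib)
  also have "cinner (Gm a) (B (cnj l) z) = cinner (cadjoint (B (cnj l)) (Gm a)) z"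
    using cinner_weyl_adjoint[OF l', of z "Gm a"] by (metis cinner_conj)
  finally show "cinner (f_minus T Gp (xhat (fst a)) l - l *\<^sub>C f_minus T Gp (xhat (snd a)) l) z
      = cinner (Gp a - cadjoint (B (cnj l)) (Gm a)) z"
    by (simp add: cinner_diff_left)
qed

end

theorem corollary4p16:
  fixes T :: "'h::chilbert \<Rightarrow> 'h"
    and Gp :: "'h \<times> 'h \<Rightarrow> 'p::chilbert"
    and Gm :: "'h \<times> 'h \<Rightarrow> 'm::chilbert"
    and B :: "complex \<Rightarrow> 'p \<Rightarrow> 'm"
    and C :: "'p \<Rightarrow> 'm"
  assumes "separable_space TYPE('h)" and "infinite_dim TYPE('h)"
    and "contraction T" and "cnu T"
    and "boundary_quadruple T Gp Gm"
    and "weyl_function T Gp Gm B"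
    and "cbounded C"
    and "graph_op T = {a \<in> sorth (A_T T). Gm a = C (Gp a)}"
  shows "\<forall>x. (\<forall>l. cmod l < 1 \<longrightarrow>
              l *\<^sub>C f_plus T Gm (xhat x) l - f_plus T Gm (xhat (T x)) l
                = B l (Gp (x, T x)) - C (Gp (x, T x)))
           \<and> (\<forall>l. cmod l < 1 \<longrightarrow>
              f_minus T Gp (xhat x) l - l *\<^sub>C f_minus T Gp (xhat (T x)) l
                = Gp (x, T x) - cadjoint (B (cnj l)) (C (Gp (x, T x))))"
proof (intro allI conjI impI)
  interpret weyl_boundary_quadruple T Gp Gm B using assms(5,6) by unfold_locales
  fix x and l :: complex
  assume l: "cmod l < 1"
  have "(x, T x) \<in> graph_op T" by (simp add: graph_op_def)
  then have a: "(x, T x) \<in> sorth (A_T T)" and "Gm (x, T x) = C (Gp (x, T x))"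
    using assms(8) by auto
  then show "l *\<^sub>C f_plus T Gm (xhat x) l - f_plus T Gm (xhat (T x)) l
      = B l (Gp (x, T x)) - C (Gp (x, T x))"
    using f_plus_xhat_boundary[OF a l] by simp
  show "f_minus T Gp (xhat x) l - l *\<^sub>C f_minus T Gp (xhat (T x)) l
      = Gp (x, T x) - cadjoint (B (cnj l)) (C (Gp (x, T x)))"
    using f_minus_xhat_boundary[OF a l] \<open>Gm (x, T x) = C (Gp (x, T x))\<close> by simp
qed

end
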